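(* In the setting described in the context, assume the Lie differential operator $\pounds_\xi$ commutes with the contraction operator $S$, i.e. $\pounds_\xi\big(S(dx^i\otimes\partial_j)\big)=S\big(\pounds_\xi(dx^i\otimes\partial_j)\big)$ for all $i,j$ and all vector fields $\xi$. Then $\pounds_\xi dx^i=k^i{}_j(\xi)\,dx^j$ with $$k^i{}_j(\xi)=f_j{}^l\,\partial_l\xi^k\,f^i{}_k+f_j{}^l\,(\partial_kf^i{}_l)\,\xi^k .$$ If moreover $S$ commutes with the covariant differential operator $\nabla$, then $$\pounds_\xi dx^i=\Big[f^i{}_k\,\partial_l\xi^k\,f_j{}^l+\big(P^i_{jk}+f_j{}^l\,\Gamma^m_{lk}\,f^i{}_m\big)\xi^k\Big]dx^j,\qquad \pounds_{\partial_k}dx^i=\big(P^i_{jk}+f_j{}^l\,\Gamma^m_{lk}\,f^i{}_m\big)dx^j .$$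
   Context: $M$ is a smooth $n$-manifold with a covariant differential operator $\nabla$ acting on vector fields via a contravariant affine connection $\Gamma$ ($\nabla_{\partial_j}\partial_i=\Gamma^k_{ij}\partial_k$) and on 1-forms via a covariant affine connection $P$ ($\nabla_{\partial_j}dx^i=P^i_{kj}dx^k$), extended to tensors by the Leibniz rule. A contraction operator $S$ (nondegenerate $C^\infty$-bilinear pairing of vector fields and 1-forms, extended to tensor products) has $S(\partial_j,dx^i)=f^i{}_j$ with $\det(f^i{}_j)\ne0$; $f_j{}^i$ denotes the inverse matrix functions, $f^i{}_kf_j{}^k=\delta^i_j$, $f^k{}_if_k{}^j=\delta^j_i$. The Lie differential operator $\pounds_\xi$ acts on functions by $\pounds_\xi f=\xi f$, on vector fields by $\pounds_\xi u=[\xi,u]$ (so $\pounds_\xi\partial_i=-\partial_i\xi^j\,\partial_j$), is linear and satisfies the Leibniz rule on tensor products, and acts on 1-forms by $\pounds_\xi dx^i=k^i{}_j(\xi)dx^j$ for some functions $k^i{}_j(\xi)$ to be determined. *)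

theory Defs
  imports "HOL-Analysis.Analysis"
begin

text \<open>Local coordinate model on an open chart domain U of real^'n.  A vector field u = u^c d_c is given
  by its components (u c), a 1-form w = w_a dx^a by its components (w a), and a
  tensor in the span of the dx^a (x) d_b by its components (T a b).\<close>

type_synonym 'n fn = "real^'n \<Rightarrow> real"

definition pd :: "'n::finite \<Rightarrow> 'n fn \<Rightarrow> 'n fn" where
  "pd l g = (\<lambda>x. deriv (\<lambda>t. g (x + t *\<^sub>R axis l 1)) 0)"

definition smooth_fn :: "(real^'n::finite) set \<Rightarrow> 'n fn \<Rightarrow> bool" where
  "smooth_fn U g \<longleftrightarrow> (\<forall>ls. (fold pd ls g) differentiable_on U)"

definition smooth_vf :: "(real^'n::finite) set \<Rightarrow> ('n \<Rightarrow> 'n fn) \<Rightarrow> bool" where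
  "smooth_vf U u \<longleftrightarrow> (\<forall>c. smooth_fn U (u c))"

definition vf_apply :: "('n::finite \<Rightarrow> 'n fn) \<Rightarrow> 'n fn \<Rightarrow> 'n fn" where
  "vf_apply X g = (\<lambda>x. \<Sum>k\<in>UNIV. X k x * pd k g x)"

definition dd :: "'n::finite \<Rightarrow> ('n \<Rightarrow> 'n fn)" where
  "dd j = (\<lambda>c x. if c = j then 1 else 0)"

definition dx :: "'n::finite \<Rightarrow> ('n \<Rightarrow> 'n fn)" where
  "dx i = (\<lambda>a x. if a = i then 1 else 0)"

definition tp :: "('n \<Rightarrow> 'n fn) \<Rightarrow> ('n \<Rightarrow> 'n fn) \<Rightarrow> ('n \<Rightarrow> 'n \<Rightarrow> 'n fn)" where
  "tp w u = (\<lambda>a b x. w a x * u b x)"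

definition tadd :: "('n \<Rightarrow> 'n \<Rightarrow> 'n fn) \<Rightarrow> ('n \<Rightarrow> 'n \<Rightarrow> 'n fn) \<Rightarrow> ('n \<Rightarrow> 'n \<Rightarrow> 'n fn)" where
  "tadd T T' = (\<lambda>a b x. T a b x + T' a b x)"

text \<open>Contraction operator S with S(d_j, dx^i) = f^i_j (f i j = f^i_j), extended
  C-infinity-bilinearly: S(T^a_b dx^a (x) d_b) = T^a_b f^a_b.\<close>
definition contr :: "('n::finite \<Rightarrow> 'n \<Rightarrow> 'n fn) \<Rightarrow> ('n \<Rightarrow> 'n \<Rightarrow> 'n fn) \<Rightarrow> 'n fn" where
  "contr f T = (\<lambda>x. \<Sum>a\<in>UNIV. \<Sum>b\<in>UNIV. T a b x * f a b x)"

text \<open>Lie derivative of a vector field: L_xi u = [xi,u]; in particular L_xi d_i = - d_i xi^j d_j.\<close>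
definition lie_vec :: "('n::finite \<Rightarrow> 'n fn) \<Rightarrow> ('n \<Rightarrow> 'n fn) \<Rightarrow> ('n \<Rightarrow> 'n fn)" where
  "lie_vec xi u = (\<lambda>c x. vf_apply xi (u c) x - vf_apply u (xi c) x)"

text \<open>Lie derivative of a 1-form, determined by linearity, Leibniz and
  L_xi dx^a = k^a_m(xi) dx^m, where k xi a m = k^a_m(xi).\<close>
definition lie_form :: "(('n::finite \<Rightarrow> 'n fn) \<Rightarrow> 'n \<Rightarrow> 'n \<Rightarrow> 'n fn)
    \<Rightarrow> ('n \<Rightarrow> 'n fn) \<Rightarrow> ('n \<Rightarrow> 'n fn) \<Rightarrow> ('n \<Rightarrow> 'n fn)" where
  "lie_form k xi w = (\<lambda>m x. vf_apply xi (w m) x + (\<Sum>a\<in>UNIV. w a x * k xi a m x))"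

text \<open>Covariant derivative of a vector field: nabla_{d_j} d_i = Gamma^k_{ij} d_k,
  with Gam k i j = Gamma^k_{ij}.\<close>
definition nabla_vec :: "('n::finite \<Rightarrow> 'n \<Rightarrow> 'n \<Rightarrow> 'n fn) \<Rightarrow> ('n \<Rightarrow> 'n fn)
    \<Rightarrow> ('n \<Rightarrow> 'n fn) \<Rightarrow> ('n \<Rightarrow> 'n fn)" where
  "nabla_vec Gam X u = (\<lambda>c x. vf_apply X (u c) x
       + (\<Sum>b\<in>UNIV. \<Sum>k\<in>UNIV. u b x * X k x * Gam c b k x))"

text \<open>Covariant derivative of a 1-form: nabla_{d_j} dx^i = P^i_{kj} dx^k,
  with P i k j = P^i_{kj}.\<close>
definition nabla_form :: "('n::finite \<Rightarrow> 'n \<Rightarrow> 'n \<Rightarrow> 'n fn) \<Rightarrow> ('n \<Rightarrow> 'n fn)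
    \<Rightarrow> ('n \<Rightarrow> 'n fn) \<Rightarrow> ('n \<Rightarrow> 'n fn)" where
  "nabla_form P X w = (\<lambda>m x. vf_apply X (w m) x
       + (\<Sum>a\<in>UNIV. \<Sum>k\<in>UNIV. w a x * X k x * P a m k x))"

end

theory Submission
  imports Defs
begin

text \<open>Applying \<open>\<pounds>\<^sub>\<xi>\<close> to \<open>S(dx\<^sup>i \<otimes> \<partial>\<^sub>j) = f\<^sup>i\<^sub>j\<close> and using
  \<open>\<pounds>\<^sub>\<xi> \<partial>\<^sub>j = - \<partial>\<^sub>j\<xi>\<^sup>b \<partial>\<^sub>b\<close> gives the linear system
  \<open>\<xi>(f\<^sup>i\<^sub>l) + \<partial>\<^sub>l\<xi>\<^sup>m f\<^sup>i\<^sub>m = k\<^sup>i\<^sub>a(\<xi>) f\<^sup>a\<^sub>l\<close> for the coefficients \<open>k\<^sup>i\<^sub>a(\<xi>)\<close>;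
  multiplying by the inverse matrix \<open>f\<^sub>j\<^sup>l\<close> solves it. If \<open>S\<close> also commutes with \<open>\<nabla>\<close>,
  the same computation with \<open>\<nabla>\<^sub>\<xi>\<close> expresses \<open>\<xi>(f\<^sup>i\<^sub>l)\<close> through \<open>P\<close> and \<open>\<Gamma>\<close>, and
  substituting this removes the derivatives of \<open>f\<close> from the formula for \<open>k\<close>.\<close>

lemma mult_if_zero_left: "(if P then a else 0) * (b::real) = (if P then a * b else 0)"
  by simp

lemma mult_if_zero_right: "(b::real) * (if P then a else 0) = (if P then b * a else 0)"
  by simp

lemma sum_if_zero_const_cond: "(\<Sum>k\<in>S. if P then g k else (0::real)) = (if P then sum g S else 0)"
  by simp

lemmas delta_simps = mult_if_zero_left mult_if_zero_right sum_if_zero_const_cond sum.delta sum.delta'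

lemma pd_const [simp]: "pd l (\<lambda>x. c) = (\<lambda>x. 0)"
  by (simp add: pd_def)

lemma vf_apply_const [simp]: "vf_apply X (\<lambda>x. c) = (\<lambda>x. 0)"
  by (simp add: vf_apply_def)

lemma dd_apply: "dd j c x = (if c = j then 1 else 0)"
  by (simp add: dd_def)

lemma pd_dd: "pd l (dd j c) = (\<lambda>x. 0)"
  by (simp add: dd_def)

lemma smooth_fn_const: "smooth_fn U (\<lambda>x. c)"
proof -
  have fold_const: "fold pd ls (\<lambda>x. c) = (\<lambda>x. if ls = [] then c else 0)" for ls c
    by (induction ls arbitrary: c) auto
  have "fold pd ls (\<lambda>x. c) differentiable_on U" for ls
    unfolding fold_const by (rule differentiable_on_const)
  then show ?thesis
    by (simp add: smooth_fn_def)
qed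

lemma smooth_vf_dd: "smooth_vf U (dd m)"
  by (simp add: smooth_vf_def dd_def smooth_fn_const)

lemma lie_form_dx: "lie_form k xi (dx i) j x = k xi i j x"
  by (simp add: lie_form_def dx_def delta_simps)

lemma lie_vec_dd: "lie_vec xi (dd j) b x = - pd j (xi b) x"
  by (simp add: lie_vec_def vf_apply_def dd_def delta_simps)

lemma nabla_form_dx: "nabla_form P X (dx i) m x = (\<Sum>k\<in>UNIV. X k x * P i m k x)"
  by (simp add: nabla_form_def dx_def delta_simps)

lemma nabla_vec_dd: "nabla_vec Gam X (dd j) c x = (\<Sum>k\<in>UNIV. X k x * Gam c j k x)"
  by (simp add: nabla_vec_def dd_def delta_simps)

lemma contr_tp_dx_dd: "contr f (tp (dx i) (dd j)) = f i j"
  by (simp add: contr_def tp_def dx_def dd_def delta_simps)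

lemma contr_tadd_tp_dd_dx:
  "contr f (tadd (tp w (dd j)) (tp (dx i) V)) x
   = (\<Sum>a\<in>UNIV. w a x * f a j x) + (\<Sum>b\<in>UNIV. V b x * f i b x)"
  by (simp add: contr_def tadd_def tp_def dx_def dd_def distrib_right sum.distrib delta_simps)

lemma sum_mult_right_inverse_coeffs:
  fixes K :: "'n::finite \<Rightarrow> real"
  assumes "\<And>a m. (\<Sum>l\<in>UNIV. F a l * G m l) = (if a = m then 1 else 0)"
  shows "(\<Sum>l\<in>UNIV. G m l * (\<Sum>a\<in>UNIV. K a * F a l)) = K m"
proof -
  have "(\<Sum>l\<in>UNIV. G m l * (\<Sum>a\<in>UNIV. K a * F a l))
      = (\<Sum>l\<in>UNIV. \<Sum>a\<in>UNIV. K a * (F a l * G m l))"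
    by (simp add: sum_distrib_left algebra_simps)
  also have "\<dots> = (\<Sum>a\<in>UNIV. K a * (\<Sum>l\<in>UNIV. F a l * G m l))"
    by (subst sum.swap) (simp add: sum_distrib_left)
  also have "\<dots> = K m"
    by (simp add: assms delta_simps)
  finally show ?thesis .
qed

lemma sum_rotate3:
  "(\<Sum>a\<in>A. \<Sum>b\<in>B. \<Sum>c\<in>C. g a b c) = (\<Sum>c\<in>C. \<Sum>a\<in>A. \<Sum>b\<in>B. g a b c)"
proof -
  have "(\<Sum>a\<in>A. \<Sum>b\<in>B. \<Sum>c\<in>C. g a b c) = (\<Sum>a\<in>A. \<Sum>c\<in>C. \<Sum>b\<in>B. g a b c)"
    by (rule sum.cong[OF refl sum.swap])
  also have "\<dots> = (\<Sum>c\<in>C. \<Sum>a\<in>A. \<Sum>b\<in>B. g a b c)"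
    by (rule sum.swap)
  finally show ?thesis .
qed

lemma lie_form_dx_of_lie_contr_comm:
  assumes f_inv: "\<And>i j. (\<Sum>l\<in>UNIV. f i l x * finv j l x) = (if i = j then 1 else 0)"
    and comm: "\<And>i j. vf_apply xi (contr f (tp (dx i) (dd j))) x
        = contr f (tadd (tp (lie_form k xi (dx i)) (dd j)) (tp (dx i) (lie_vec xi (dd j)))) x"
  shows "lie_form k xi (dx i) j x
    = (\<Sum>l\<in>UNIV. \<Sum>m\<in>UNIV. finv j l x * pd l (xi m) x * f i m x)
      + (\<Sum>l\<in>UNIV. \<Sum>m\<in>UNIV. finv j l x * pd m (f i l) x * xi m x)"
proof -
  have system: "(\<Sum>m\<in>UNIV. xi m x * pd m (f i l) x) + (\<Sum>m\<in>UNIV. pd l (xi m) x * f i m x)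
      = (\<Sum>a\<in>UNIV. k xi i a x * f a l x)" for l
    using comm[of i l]
    by (simp add: contr_tp_dx_dd contr_tadd_tp_dd_dx lie_form_dx lie_vec_dd vf_apply_def sum_negf)
  have "k xi i j x = (\<Sum>l\<in>UNIV. finv j l x * ((\<Sum>m\<in>UNIV. xi m x * pd m (f i l) x)
      + (\<Sum>m\<in>UNIV. pd l (xi m) x * f i m x)))"
    unfolding system
    by (rule sum_mult_right_inverse_coeffs[OF f_inv, where K = "\<lambda>a. k xi i a x", symmetric])
  then show ?thesis
    by (simp add: lie_form_dx sum_distrib_left sum.distrib algebra_simps)
qed

lemma deriv_term_of_nabla_contr_comm:
  assumes f_inv: "\<And>i j. (\<Sum>l\<in>UNIV. f i l x * finv j l x) = (if i = j then 1 else 0)"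
    and comm: "\<And>i j. vf_apply X (contr f (tp (dx i) (dd j))) x
        = contr f (tadd (tp (nabla_form P X (dx i)) (dd j)) (tp (dx i) (nabla_vec Gam X (dd j)))) x"
  shows "(\<Sum>l\<in>UNIV. \<Sum>m\<in>UNIV. finv j l x * pd m (f i l) x * X m x)
    = (\<Sum>m\<in>UNIV. (P i j m x
        + (\<Sum>l\<in>UNIV. \<Sum>p\<in>UNIV. finv j l x * Gam p l m x * f i p x)) * X m x)"
proof -
  have deriv_f: "(\<Sum>m\<in>UNIV. X m x * pd m (f i l) x)
      = (\<Sum>a\<in>UNIV. (\<Sum>m\<in>UNIV. X m x * P i a m x) * f a l x)
        + (\<Sum>p\<in>UNIV. (\<Sum>m\<in>UNIV. X m x * Gam p l m x) * f i p x)" for l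
    using comm[of i l]
    by (simp add: contr_tp_dx_dd contr_tadd_tp_dd_dx nabla_form_dx nabla_vec_dd vf_apply_def)
  have P_term: "(\<Sum>l\<in>UNIV. finv j l x * (\<Sum>a\<in>UNIV. (\<Sum>m\<in>UNIV. X m x * P i a m x) * f a l x))
      = (\<Sum>m\<in>UNIV. X m x * P i j m x)"
    by (rule sum_mult_right_inverse_coeffs[OF f_inv,
          where K = "\<lambda>a. \<Sum>m\<in>UNIV. X m x * P i a m x"])
  have "(\<Sum>l\<in>UNIV. \<Sum>m\<in>UNIV. finv j l x * pd m (f i l) x * X m x)
      = (\<Sum>l\<in>UNIV. finv j l x * (\<Sum>m\<in>UNIV. X m x * pd m (f i l) x))"
    by (simp add: sum_distrib_left algebra_simps)
  also have "\<dots> = (\<Sum>m\<in>UNIV. X m x * P i j m x)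
      + (\<Sum>l\<in>UNIV. \<Sum>p\<in>UNIV. \<Sum>m\<in>UNIV. finv j l x * Gam p l m x * f i p x * X m x)"
    unfolding deriv_f distrib_left sum.distrib P_term
    by (simp add: sum_distrib_left sum_distrib_right algebra_simps)
  also have "\<dots> = (\<Sum>m\<in>UNIV. X m x * P i j m x)
      + (\<Sum>m\<in>UNIV. \<Sum>l\<in>UNIV. \<Sum>p\<in>UNIV. finv j l x * Gam p l m x * f i p x * X m x)"
    by (subst sum_rotate3) (rule refl)
  also have "\<dots> = (\<Sum>m\<in>UNIV. (P i j m x
        + (\<Sum>l\<in>UNIV. \<Sum>p\<in>UNIV. finv j l x * Gam p l m x * f i p x)) * X m x)"
    by (simp add: sum.distrib sum_distrib_left sum_distrib_right algebra_simps)
  finally show ?thesis .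
qed

lemma lie_form_dx_of_lie_nabla_contr_comm:
  assumes f_inv: "\<And>i j. (\<Sum>l\<in>UNIV. f i l x * finv j l x) = (if i = j then 1 else 0)"
    and lie_comm: "\<And>i j. vf_apply xi (contr f (tp (dx i) (dd j))) x
        = contr f (tadd (tp (lie_form k xi (dx i)) (dd j)) (tp (dx i) (lie_vec xi (dd j)))) x"
    and nabla_comm: "\<And>i j. vf_apply xi (contr f (tp (dx i) (dd j))) x
        = contr f (tadd (tp (nabla_form P xi (dx i)) (dd j)) (tp (dx i) (nabla_vec Gam xi (dd j)))) x"
  shows "lie_form k xi (dx i) j x
    = (\<Sum>m\<in>UNIV. \<Sum>l\<in>UNIV. f i m x * pd l (xi m) x * finv j l x)
      + (\<Sum>m\<in>UNIV. (P i j m x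
          + (\<Sum>l\<in>UNIV. \<Sum>p\<in>UNIV. finv j l x * Gam p l m x * f i p x)) * xi m x)"
proof -
  have "(\<Sum>l\<in>UNIV. \<Sum>m\<in>UNIV. finv j l x * pd l (xi m) x * f i m x)
      = (\<Sum>m\<in>UNIV. \<Sum>l\<in>UNIV. f i m x * pd l (xi m) x * finv j l x)"
    by (subst sum.swap) (simp add: algebra_simps)
  then show ?thesis
    using lie_form_dx_of_lie_contr_comm[where finv = finv and xi = xi and k = k, OF f_inv lie_comm]
      deriv_term_of_nabla_contr_comm[where finv = finv and X = xi, OF f_inv nabla_comm]
    by simp
qed

theorem mainTheorem5:
  fixes U :: "(real^'n::finite) set"
    and f finv :: "'n \<Rightarrow> 'n \<Rightarrow> 'n fn"
    and Gam P :: "'n \<Rightarrow> 'n \<Rightarrow> 'n \<Rightarrow> 'n fn"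
    and k :: "('n \<Rightarrow> 'n fn) \<Rightarrow> 'n \<Rightarrow> 'n \<Rightarrow> 'n fn"
  assumes U_open: "open U"
    and f_smooth: "\<And>i j. smooth_fn U (f i j)"
    and finv_smooth: "\<And>i j. smooth_fn U (finv i j)"
    and Gam_smooth: "\<And>a b c. smooth_fn U (Gam a b c)"
    and P_smooth: "\<And>a b c. smooth_fn U (P a b c)"
    and f_det: "\<And>x. x \<in> U \<Longrightarrow> det (\<chi> i j. f i j x) \<noteq> 0"
    and f_inv1: "\<And>x i j. x \<in> U \<Longrightarrow> (\<Sum>l\<in>UNIV. f i l x * finv j l x) = (if i = j then 1 else 0)"
    and f_inv2: "\<And>x i j. x \<in> U \<Longrightarrow> (\<Sum>l\<in>UNIV. f l i x * finv l j x) = (if i = j then 1 else 0)"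
    and lie_comm: "\<And>xi i j x. smooth_vf U xi \<Longrightarrow> x \<in> U \<Longrightarrow>
        vf_apply xi (contr f (tp (dx i) (dd j))) x
        = contr f (tadd (tp (lie_form k xi (dx i)) (dd j)) (tp (dx i) (lie_vec xi (dd j)))) x"
  shows "(\<forall>xi i j x. smooth_vf U xi \<longrightarrow> x \<in> U \<longrightarrow>
            lie_form k xi (dx i) j x
            = (\<Sum>l\<in>UNIV. \<Sum>m\<in>UNIV. finv j l x * pd l (xi m) x * f i m x)
              + (\<Sum>l\<in>UNIV. \<Sum>m\<in>UNIV. finv j l x * pd m (f i l) x * xi m x))
       \<and> ((\<forall>X i j x. smooth_vf U X \<longrightarrow> x \<in> U \<longrightarrow>
              vf_apply X (contr f (tp (dx i) (dd j))) x
              = contr f (tadd (tp (nabla_form P X (dx i)) (dd j))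
                              (tp (dx i) (nabla_vec Gam X (dd j)))) x)
          \<longrightarrow> (\<forall>xi i j x. smooth_vf U xi \<longrightarrow> x \<in> U \<longrightarrow>
                 lie_form k xi (dx i) j x
                 = (\<Sum>m\<in>UNIV. \<Sum>l\<in>UNIV. f i m x * pd l (xi m) x * finv j l x)
                   + (\<Sum>m\<in>UNIV. (P i j m x
                        + (\<Sum>l\<in>UNIV. \<Sum>p\<in>UNIV. finv j l x * Gam p l m x * f i p x)) * xi m x))
            \<and> (\<forall>m i j x. x \<in> U \<longrightarrow>
                 lie_form k (dd m) (dx i) j x
                 = P i j m x + (\<Sum>l\<in>UNIV. \<Sum>p\<in>UNIV. finv j l x * Gam p l m x * f i p x)))"
    (is "?lie_formula \<and> (?nabla_comm \<longrightarrow> ?lie_formula_P_Gam \<and> ?lie_coordinate)")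
proof (intro conjI impI)
  \<comment> \<open>The computation is pointwise: of the hypotheses on \<open>f\<close> only \<open>f_inv1\<close> is needed.\<close>
  show ?lie_formula
    by (intro allI impI lie_form_dx_of_lie_contr_comm f_inv1 lie_comm)
  assume nabla_comm: ?nabla_comm
  show lie_P_Gam: ?lie_formula_P_Gam
    by (intro allI impI lie_form_dx_of_lie_nabla_contr_comm f_inv1 lie_comm
        nabla_comm[rule_format])
  show ?lie_coordinate
  proof (intro allI impI)
    fix m i j x
    assume x: "x \<in> U"
    show "lie_form k (dd m) (dx i) j x
        = P i j m x + (\<Sum>l\<in>UNIV. \<Sum>p\<in>UNIV. finv j l x * Gam p l m x * f i p x)"
      using lie_P_Gam[rule_format, OF smooth_vf_dd x, of m i j]
      by (simp add: pd_dd dd_apply delta_simps)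
  qed
qed

end
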